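(* Let $p$ be a prime, $d \geq 1$, $V = \mathbb{F}_p^d$, and let $G \leq \mathrm{GL}(V)$ be an irreducible linear group on $V$. Then $\overrightarrow{\mathrm{diam}}(V, G) \leq d(p-1)$.
   Context: Vectors are row vectors and $G$ acts on $V$ by right multiplication. For a subset $\Delta \subseteq V$ and a positive integer $m$, $m \cdot \Delta$ denotes the $m$-fold sumset $\{\delta_1 + \dots + \delta_m \mid \delta_i \in \Delta\}$. $\overrightarrow{\mathrm{diam}}(V, G)$ denotes the maximum of the directed diameters of the nondiagonal orbital graphs of the affine permutation group $VG = \{ v \mapsto b + vA \mid b \in V, A \in G\}$ on $V$, i.e. of the Cayley digraphs on $V$ with connection set a nonzero $G$-orbit $\mathcal{O}$ (arcs $u \to u + w$, $w \in \mathcal{O}$); equivalently, it is the least positive integer $m$ such that $m \cdot (\mathcal{O} \cup \{0\}) = V$ for every nonzero orbit $\mathcal{O}$ of $G$ on $V$. *)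

theory Defs
  imports "HOL-Analysis.Analysis"
begin

text \<open>Row vectors in 'k^'n; a matrix A :: 'k^'n^'n acts by right multiplication v v* A.\<close>

definition matrix_group :: "('k::field ^'n^'n) set \<Rightarrow> bool" where
  "matrix_group G \<longleftrightarrow> (\<forall>A\<in>G. invertible A) \<and> mat 1 \<in> G \<and>
     (\<forall>A\<in>G. \<forall>B\<in>G. A ** B \<in> G) \<and> (\<forall>A\<in>G. matrix_inv A \<in> G)"

definition irreducible_group :: "('k::field ^'n^'n) set \<Rightarrow> bool" where
  "irreducible_group G \<longleftrightarrow>
     (\<forall>W :: ('k^'n) set. vec.subspace W \<and> (\<forall>w\<in>W. \<forall>A\<in>G. w v* A \<in> W)
        \<longrightarrow> W = {0} \<or> W = UNIV)"

definition orbit :: "('k::field ^'n^'n) set \<Rightarrow> 'k^'n \<Rightarrow> ('k^'n) set" where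
  "orbit G v = {v v* A | A. A \<in> G}"

fun sumset :: "nat \<Rightarrow> 'a::comm_monoid_add set \<Rightarrow> 'a set" where
  "sumset 0 D = {0}"
| "sumset (Suc m) D = {x + y | x y. x \<in> D \<and> y \<in> sumset m D}"

definition ddiam :: "('k::field ^'n^'n) set \<Rightarrow> nat" where
  "ddiam G = (LEAST m. 0 < m \<and>
     (\<forall>v::'k^'n. v \<noteq> 0 \<longrightarrow> sumset m (orbit G v \<union> {0}) = UNIV))"

end

theory Submission
  imports Defs "HOL-Number_Theory.Residues"
begin

text \<open>For \<open>v \<noteq> 0\<close> the span of the orbit \<open>vG\<close> is \<open>G\<close>-invariant, hence all of \<open>V\<close> by
  irreducibility, so the orbit contains a basis \<open>b\<^sub>1, \<dots>, b\<^sub>d\<close> of \<open>V\<close>. Over the prime field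
  every coefficient is the image of an integer \<open>0 \<le> c < p\<close>, so every vector \<open>\<Sum> c\<^sub>i b\<^sub>i\<close> is
  a sum of at most \<open>d(p - 1)\<close> orbit elements; padding with zeros makes it exactly \<open>d(p - 1)\<close>.\<close>

lemma zero_mem_sumset: "0 \<in> D \<Longrightarrow> (0::'a::comm_monoid_add) \<in> sumset n D"
  by (induction n) force+

lemma add_mem_sumset:
  fixes x y :: "'a::comm_monoid_add"
  shows "x \<in> sumset a D \<Longrightarrow> y \<in> sumset b D \<Longrightarrow> x + y \<in> sumset (a + b) D"
proof (induction a arbitrary: x)
  case 0
  then show ?case by simp
next
  case (Suc a)
  then obtain u w where "x = u + w" "u \<in> D" "w \<in> sumset a D" by auto
  with Suc have "w + y \<in> sumset (a + b) D" by blast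
  with \<open>x = u + w\<close> \<open>u \<in> D\<close> show ?case by (auto simp: add.assoc)
qed

lemma sumset_mono:
  fixes D :: "'a::comm_monoid_add set"
  assumes "0 \<in> D" "a \<le> b"
  shows "sumset a D \<subseteq> sumset b D"
proof
  fix x assume "x \<in> sumset a D"
  then have "x + 0 \<in> sumset (a + (b - a)) D"
    using add_mem_sumset zero_mem_sumset[OF assms(1)] by blast
  with assms(2) show "x \<in> sumset b D" by simp
qed

lemma sum_mem_sumset:
  fixes f :: "'b \<Rightarrow> 'a::comm_monoid_add"
  assumes "finite B" "\<And>b. b \<in> B \<Longrightarrow> f b \<in> sumset (g b) D"
  shows "sum f B \<in> sumset (sum g B) D"
  using assms by (induction B rule: finite_induct) (auto intro: add_mem_sumset)

lemma of_nat_scale_mem_sumset: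
  fixes b :: "'k::field ^'n"
  assumes "b \<in> D"
  shows "of_nat n *s b \<in> sumset n D"
proof (induction n)
  case 0
  then show ?case by simp
next
  case (Suc n)
  have "of_nat (Suc n) *s b = b + of_nat n *s b"
    by (simp add: vector_sadd_rdistrib)
  with Suc assms show ?case by auto
qed

lemma image_of_nat_lessThan_CARD:
  assumes "prime CARD('k::{ring_1,finite})"
  shows "(of_nat :: nat \<Rightarrow> 'k) ` {..<CARD('k)} = UNIV"
proof -
  have "CHAR('k) \<noteq> 1" by simp
  then have "CHAR('k) = CARD('k)"
    using CHAR_dvd_CARD[where 'a='k] assms by (meson prime_nat_iff)
  then have "inj_on (of_nat :: nat \<Rightarrow> 'k) {..<CARD('k)}"
    by (intro inj_onI) (auto simp: of_nat_eq_iff_cong_CHAR cong_def)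
  then show ?thesis
    by (simp add: card_image card_subset_eq)
qed

lemma sumset_spanning_set_prime_field:
  fixes B D :: "('k::{field,finite} ^'n) set"
  assumes "prime CARD('k)" "finite B" "vec.span B = UNIV" "B \<subseteq> D" "0 \<in> D"
  shows "sumset (card B * (CARD('k) - 1)) D = UNIV"
proof (intro UNIV_eq_I[symmetric])
  fix x :: "'k^'n"
  obtain u where x: "x = (\<Sum>b\<in>B. u b *s b)"
    using vec.span_finite[OF assms(2)] assms(3) by auto
  have "\<forall>b. \<exists>n. n < CARD('k) \<and> u b = of_nat n"
    using image_of_nat_lessThan_CARD[OF assms(1)] by (metis UNIV_I imageE lessThan_iff)
  then obtain c where c: "\<And>b. c b < CARD('k) \<and> u b = of_nat (c b)"
    by metis
  have "x = (\<Sum>b\<in>B. of_nat (c b) *s b)"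
    using x c by simp
  also have "\<dots> \<in> sumset (\<Sum>b\<in>B. c b) D"
    using assms(2,4) by (intro sum_mem_sumset of_nat_scale_mem_sumset) auto
  also have "\<dots> \<subseteq> sumset (card B * (CARD('k) - 1)) D"
  proof (rule sumset_mono[OF assms(5)])
    have "c b \<le> CARD('k) - 1" for b
      using c[of b] by linarith
    then have "(\<Sum>b\<in>B. c b) \<le> (\<Sum>b\<in>B. CARD('k) - 1)"
      by (intro sum_mono)
    then show "(\<Sum>b\<in>B. c b) \<le> card B * (CARD('k) - 1)" by simp
  qed
  finally show "x \<in> sumset (card B * (CARD('k) - 1)) D" .
qed

lemma mem_orbit_self: "matrix_group G \<Longrightarrow> v \<in> orbit G v"
  unfolding matrix_group_def orbit_def by (metis (mono_tags) mem_Collect_eq vector_matrix_mul_rid)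

lemma orbit_closed:
  assumes "matrix_group G" "w \<in> orbit G v" "A \<in> G"
  shows "w v* A \<in> orbit G v"
proof -
  obtain B where "B \<in> G" "w = v v* B"
    using assms(2) unfolding orbit_def by auto
  moreover have "B ** A \<in> G"
    using assms(1,3) \<open>B \<in> G\<close> unfolding matrix_group_def by auto
  ultimately show ?thesis
    unfolding orbit_def by (auto simp: vector_matrix_mul_assoc)
qed

lemma span_orbit_closed:
  assumes "matrix_group G" "x \<in> vec.span (orbit G v)" "A \<in> G"
  shows "x v* A \<in> vec.span (orbit G v)"
proof -
  have "(\<lambda>x. x v* A) = (*v) (transpose A)"
    by (simp add: fun_eq_iff)
  then have lin: "Vector_Spaces.linear (*s) (*s) (\<lambda>x. x v* A)"
    by simp
  have "x v* A \<in> vec.span ((\<lambda>x. x v* A) ` orbit G v)"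
    using assms(2) by (simp add: vec.linear_span_image[OF lin])
  also have "\<dots> \<subseteq> vec.span (orbit G v)"
    using orbit_closed[OF assms(1) _ assms(3)] by (intro vec.span_mono) auto
  finally show ?thesis .
qed

lemma span_orbit_eq_UNIV:
  assumes "matrix_group G" "irreducible_group G" "v \<noteq> 0"
  shows "vec.span (orbit G v) = UNIV"
proof -
  have "vec.span (orbit G v) = {0} \<or> vec.span (orbit G v) = UNIV"
    using assms(2) span_orbit_closed[OF assms(1)] vec.subspace_span
    unfolding irreducible_group_def by blast
  moreover have "v \<in> vec.span (orbit G v)"
    using mem_orbit_self[OF assms(1)] by (rule vec.span_base)
  ultimately show ?thesis using assms(3) by blast
qed

lemma orbit_contains_basis:
  assumes "matrix_group G" "irreducible_group G" "v \<noteq> 0"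
  obtains B :: "('k::field ^'n) set"
  where "B \<subseteq> orbit G v" "finite B" "vec.span B = UNIV" "card B = CARD('n)"
proof -
  obtain B where B: "B \<subseteq> orbit G v" "vec.independent B" "orbit G v \<subseteq> vec.span B"
    "card B = vec.dim (orbit G v)"
    using vec.basis_exists by blast
  have "vec.span (orbit G v) \<subseteq> vec.span B"
    using B(3) by (rule vec.span_minimal[OF _ vec.subspace_span])
  then have "vec.span B = UNIV"
    using span_orbit_eq_UNIV[OF assms] by blast
  moreover have "vec.dim (orbit G v) = CARD('n)"
    using vec.dim_span[of "orbit G v"] by (simp only: span_orbit_eq_UNIV[OF assms] vec_dim_card)
  ultimately show thesis
    using that B vec.finiteI_independent by auto
qed

theorem corollary2p2:
  fixes G :: "('k::{field,finite} ^'n^'n) set"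
  assumes "prime CARD('k)"
    and "matrix_group G"
    and "irreducible_group G"
  shows "ddiam G \<le> CARD('n) * (CARD('k) - 1)"
proof -
  have "sumset (CARD('n) * (CARD('k) - 1)) (orbit G v \<union> {0}) = UNIV"
    if v: "v \<noteq> 0" for v :: "'k^'n"
  proof -
    obtain B where "B \<subseteq> orbit G v" "finite B" "vec.span B = UNIV" "card B = CARD('n)"
      using orbit_contains_basis[OF assms(2,3) v] .
    then show ?thesis
      using sumset_spanning_set_prime_field[OF assms(1), of B "orbit G v \<union> {0}"] by auto
  qed
  moreover have "0 < CARD('n) * (CARD('k) - 1)"
    using prime_ge_2_nat[OF assms(1)] by simp
  ultimately show ?thesis
    unfolding ddiam_def by (intro Least_le) blast
qed

end
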